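(* Consider the distributed quantized weight-balancing algorithm described in the context on a strongly connected digraph, with step-size $\gamma(k)=2^{-n}$ for $2^n-1\le k\le 2^{n+1}-2$. For every $k\in\mathbb{Z}_+$: if the decreasing event $\mathcal{D}_k$ occurs then $\Vert\boldsymbol{\epsilon}(k+1)\Vert_1\le\Vert\boldsymbol{\epsilon}(k)\Vert_1-2\gamma(k)$, and otherwise $\Vert\boldsymbol{\epsilon}(k+1)\Vert_1=\Vert\boldsymbol{\epsilon}(k)\Vert_1$.
   Context: $\mathcal{G}=(\mathcal{V},\mathcal{E})$, $\mathcal{V}=\{1,\dots,N\}$, no self-loops; $\mathcal{N}_i^-=\{j:(j,i)\in\mathcal{E}\}$, $\mathcal{N}_i^+=\{j:(i,j)\in\mathcal{E}\}$, $d_i^+=|\mathcal{N}_i^+|$. Algorithm: $a_{ij}(0)=1$ if $j\in\mathcal{N}_i^-$ and $0$ otherwise; $b_i(k)=\sum_{j\in\mathcal{N}_i^-}a_{ij}(k)-\sum_{j\in\mathcal{N}_i^+}a_{ji}(k)$; $n_i(k)=1$ if $b_i(k)\ge d_i^+\gamma(k)$, else $0$; $a_{ij}(k+1)=a_{ij}(k)+n_j(k)\gamma(k)$ for $j\in\mathcal{N}_i^-$. $\boldsymbol{\epsilon}(k)=(|b_i(k)|)_{i=1}^N$. The decreasing event $\mathcal{D}_k$: there exist $i\in\mathcal{V}$ and $j\in\mathcal{N}_i^+$ with $n_i(k)>0$ and $b_j(k)<0$. *)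

theory Defs
  imports Complex_Main
begin

(* Edges are pairs (j,i) meaning j -> i. The weight a_ij (j in N_i^-) is stored
   as w (j,i), i.e. indexed by the edge (source, target). *)

definition in_nbrs :: "(nat \<times> nat) set \<Rightarrow> nat \<Rightarrow> nat set" where
  "in_nbrs E i = {j. (j, i) \<in> E}"

definition out_nbrs :: "(nat \<times> nat) set \<Rightarrow> nat \<Rightarrow> nat set" where
  "out_nbrs E i = {j. (i, j) \<in> E}"

definition out_deg :: "(nat \<times> nat) set \<Rightarrow> nat \<Rightarrow> nat" where
  "out_deg E i = card (out_nbrs E i)"

definition gamma :: "nat \<Rightarrow> real" where
  "gamma k = (1/2) ^ (THE n. 2^n - 1 \<le> k \<and> k \<le> 2^(n+1) - 2)"

definition imbalance :: "(nat \<times> nat) set \<Rightarrow> (nat \<times> nat \<Rightarrow> real) \<Rightarrow> nat \<Rightarrow> real" where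
  "imbalance E w i = (\<Sum>j\<in>in_nbrs E i. w (j, i)) - (\<Sum>j\<in>out_nbrs E i. w (i, j))"

definition fires :: "(nat \<times> nat) set \<Rightarrow> (nat \<times> nat \<Rightarrow> real) \<Rightarrow> nat \<Rightarrow> nat \<Rightarrow> bool" where
  "fires E w k i \<longleftrightarrow> imbalance E w i \<ge> real (out_deg E i) * gamma k"

primrec wts :: "(nat \<times> nat) set \<Rightarrow> nat \<Rightarrow> (nat \<times> nat \<Rightarrow> real)" where
  "wts E 0 = (\<lambda>e. if e \<in> E then 1 else 0)"
| "wts E (Suc k) = (\<lambda>(j, i). if (j, i) \<in> E then
      wts E k (j, i) + (if fires E (wts E k) k j then gamma k else 0) else 0)"

definition bk :: "(nat \<times> nat) set \<Rightarrow> nat \<Rightarrow> nat \<Rightarrow> real" where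
  "bk E k i = imbalance E (wts E k) i"

definition nk :: "(nat \<times> nat) set \<Rightarrow> nat \<Rightarrow> nat \<Rightarrow> real" where
  "nk E k i = (if fires E (wts E k) k i then 1 else 0)"

definition eps_norm1 :: "nat \<Rightarrow> (nat \<times> nat) set \<Rightarrow> nat \<Rightarrow> real" where
  "eps_norm1 N E k = (\<Sum>i\<in>{1..N}. \<bar>bk E k i\<bar>)"

definition dec_event :: "nat \<Rightarrow> (nat \<times> nat) set \<Rightarrow> nat \<Rightarrow> bool" where
  "dec_event N E k \<longleftrightarrow> (\<exists>i\<in>{1..N}. \<exists>j\<in>out_nbrs E i. nk E k i > 0 \<and> bk E k j < 0)"

definition strongly_connected :: "nat \<Rightarrow> (nat \<times> nat) set \<Rightarrow> bool" where
  "strongly_connected N E \<longleftrightarrow> (\<forall>i\<in>{1..N}. \<forall>j\<in>{1..N}. (i, j) \<in> E\<^sup>*)"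

end

(* Let c_j = n_j(k) gamma(k), the amount a firing node j adds to each of its out-edges.
   Then b_i(k+1) = b_i(k) + I_i - d_i^+ c_i with inflow I_i = sum of c_j over in-neighbours j,
   and summed over all nodes inflow and outflow cancel, since both count every edge once.
   Hence the 1-norm drops by the sum of |b_i| + I_i - d_i^+ c_i - |b_i(k+1)| >= 0. This term
   vanishes unless b_i(k) < 0 < I_i, since a firing node has b_i >= d_i^+ gamma(k) >= 0 and
   stays nonnegative. If b_i(k) < 0 < I_i, both |b_i| and I_i are at least gamma(k), because
   all weights are integer multiples of gamma(k) (each gamma(k) is an integer multiple of
   gamma(k+1)); so the term is at least 2 gamma(k). *)
theory Submission
  imports Defs "HOL-Library.Discrete_Functions"
begin

lemma gamma_eq_floor_log: "gamma k = (1/2) ^ floor_log (Suc k)"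
proof -
  have level_iff: "(2^m - 1 \<le> k \<and> k \<le> 2^(m+1) - 2) \<longleftrightarrow> (2^m \<le> Suc k \<and> Suc k < 2 * 2^m)"
    for m :: nat
  proof -
    have "1 \<le> (2::nat) ^ m" "2 ^ (m + 1) = 2 * (2::nat) ^ m" by simp_all
    then show ?thesis by linarith
  qed
  have "(THE m. 2^m - 1 \<le> k \<and> k \<le> 2^(m+1) - 2) = floor_log (Suc k)"
  proof (rule the_equality)
    show "2 ^ floor_log (Suc k) - 1 \<le> k \<and> k \<le> 2 ^ (floor_log (Suc k) + 1) - 2"
      unfolding level_iff using floor_log_exp2_le floor_log_exp2_gt by blast
  next
    fix m assume "2^m - 1 \<le> k \<and> k \<le> 2^(m+1) - 2"
    then show "m = floor_log (Suc k)"
      unfolding level_iff by (intro floor_log_eqI[symmetric]) auto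
  qed
  then show ?thesis
    unfolding gamma_def by simp
qed

lemma gamma_pos: "0 < gamma k"
  by (simp add: gamma_eq_floor_log)

lemma gamma_0: "gamma 0 = 1"
  by (simp add: gamma_eq_floor_log)

lemma gamma_ratio_Ints: "gamma k / gamma (Suc k) \<in> \<int>"
proof -
  define m where "m = floor_log (Suc k)"
  define m' where "m' = floor_log (Suc (Suc k))"
  have "m \<le> m'"
    unfolding m_def m'_def by (simp add: floor_log_le_iff)
  then have "(1/2::real) ^ m / (1/2) ^ m' = 2 ^ (m' - m)"
    by (simp add: power_diff power_one_over)
  then show ?thesis
    by (simp add: gamma_eq_floor_log flip: m_def m'_def)
qed

lemma wts_div_gamma_Ints: "wts E k e / gamma k \<in> \<int>"
proof (induction k arbitrary: e)
  case 0
  show ?case by (simp add: gamma_0)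
next
  case (Suc k)
  obtain j i where e: "e = (j, i)" by fastforce
  have step: "wts E (Suc k) (j, i) / gamma (Suc k) =
      (if (j, i) \<in> E then (wts E k (j, i) / gamma k + nk E k j) * (gamma k / gamma (Suc k)) else 0)"
    using gamma_pos[of k] gamma_pos[of "Suc k"] by (simp add: nk_def field_simps)
  have "(wts E k (j, i) / gamma k + nk E k j) * (gamma k / gamma (Suc k)) \<in> \<int>"
    by (intro Ints_mult Ints_add Suc.IH gamma_ratio_Ints) (simp add: nk_def)
  then show ?case
    unfolding e step by simp
qed

lemma bk_div_gamma_Ints: "bk E k i / gamma k \<in> \<int>"
  unfolding bk_def imbalance_def diff_divide_distrib sum_divide_distrib
  by (intro Ints_diff Ints_sum wts_div_gamma_Ints)

lemma Ints_multiple_ge: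
  fixes x g :: real
  assumes "x / g \<in> \<int>" "0 < g" "0 < x"
  shows "g \<le> x"
proof -
  obtain z where z: "x / g = of_int z"
    using assms(1) Ints_cases by blast
  moreover have "0 < x / g"
    using assms(2,3) by simp
  ultimately have "1 \<le> z"
    by simp
  then have "g \<le> of_int z * g"
    using assms(2) by simp
  also have "\<dots> = x"
    using z assms(2) by (simp add: field_simps)
  finally show ?thesis .
qed

lemma bk_le_neg_gamma: "bk E k i < 0 \<Longrightarrow> bk E k i \<le> - gamma k"
  using Ints_multiple_ge[of "- bk E k i" "gamma k"] bk_div_gamma_Ints[of E k i] gamma_pos[of k]
  by simp

definition inflow :: "(nat \<times> nat) set \<Rightarrow> nat \<Rightarrow> nat \<Rightarrow> real" where
  "inflow E k i = (\<Sum>j\<in>in_nbrs E i. nk E k j * gamma k)"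

definition outflow :: "(nat \<times> nat) set \<Rightarrow> nat \<Rightarrow> nat \<Rightarrow> real" where
  "outflow E k i = real (out_deg E i) * nk E k i * gamma k"

lemma nk_nonneg: "0 \<le> nk E k i"
  by (simp add: nk_def)

lemma inflow_nonneg: "0 \<le> inflow E k i"
  unfolding inflow_def using gamma_pos[of k] by (intro sum_nonneg) (simp add: nk_def)

lemma outflow_nonneg: "0 \<le> outflow E k i"
  unfolding outflow_def using gamma_pos[of k] by (simp add: nk_def)

lemma outflow_eq_0_or_le_bk: "outflow E k i = 0 \<or> outflow E k i \<le> bk E k i"
  by (simp add: outflow_def nk_def bk_def fires_def)

lemma gamma_le_inflow: "0 < inflow E k i \<Longrightarrow> gamma k \<le> inflow E k i"
proof (rule Ints_multiple_ge)
  have "inflow E k i / gamma k = (\<Sum>j\<in>in_nbrs E i. nk E k j)"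
    using gamma_pos[of k] by (simp add: inflow_def sum_divide_distrib)
  then show "inflow E k i / gamma k \<in> \<int>"
    by (auto simp: nk_def)
qed (simp_all add: gamma_pos)

lemma inflow_pos_iff:
  assumes "finite (in_nbrs E i)"
  shows "0 < inflow E k i \<longleftrightarrow> (\<exists>j\<in>in_nbrs E i. 0 < nk E k j)"
proof -
  have "inflow E k i = 0 \<longleftrightarrow> (\<forall>j\<in>in_nbrs E i. nk E k j = 0)"
    unfolding inflow_def using assms gamma_pos[of k]
    by (subst sum_nonneg_eq_0_iff) (auto simp: nk_def)
  then show ?thesis
    using inflow_nonneg[of E k i] nk_nonneg[of E k] by (auto simp: order_less_le)
qed

lemma bk_Suc: "bk E (Suc k) i = bk E k i + inflow E k i - outflow E k i"
proof -
  have "(\<Sum>j\<in>in_nbrs E i. wts E (Suc k) (j, i)) = (\<Sum>j\<in>in_nbrs E i. wts E k (j, i) + nk E k j * gamma k)"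
    by (rule sum.cong) (auto simp: in_nbrs_def nk_def)
  moreover have "(\<Sum>j\<in>out_nbrs E i. wts E (Suc k) (i, j)) = (\<Sum>j\<in>out_nbrs E i. wts E k (i, j) + nk E k i * gamma k)"
    by (rule sum.cong) (auto simp: out_nbrs_def nk_def)
  ultimately show ?thesis
    by (simp add: bk_def imbalance_def inflow_def outflow_def out_deg_def sum.distrib)
qed

lemma sum_in_nbrs_eq_sum_out_deg:
  fixes c :: "nat \<Rightarrow> 'a::comm_semiring_1"
  assumes "E \<subseteq> V \<times> V" "finite V"
  shows "(\<Sum>i\<in>V. \<Sum>j\<in>in_nbrs E i. c j) = (\<Sum>j\<in>V. of_nat (out_deg E j) * c j)"
proof -
  have "in_nbrs E i = {j. j \<in> V \<and> (j, i) \<in> E}" "out_nbrs E j = {i. i \<in> V \<and> (j, i) \<in> E}" for i j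
    using assms(1) by (auto simp: in_nbrs_def out_nbrs_def)
  then show ?thesis
    using sum.swap_restrict[OF assms(2) assms(2), of "\<lambda>i j. c j" "\<lambda>i j. (j, i) \<in> E"]
    by (simp add: out_deg_def)
qed

lemma sum_inflow_eq_sum_outflow:
  assumes "E \<subseteq> V \<times> V" "finite V"
  shows "(\<Sum>i\<in>V. inflow E k i) = (\<Sum>i\<in>V. outflow E k i)"
  unfolding inflow_def outflow_def
  using sum_in_nbrs_eq_sum_out_deg[OF assms, of "\<lambda>j. nk E k j * gamma k"]
  by (simp add: mult.assoc)

definition abs_decrease :: "(nat \<times> nat) set \<Rightarrow> nat \<Rightarrow> nat \<Rightarrow> real" where
  "abs_decrease E k i = \<bar>bk E k i\<bar> + inflow E k i - outflow E k i - \<bar>bk E (Suc k) i\<bar>"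

lemma abs_decrease_eq_0:
  assumes "\<not> (bk E k i < 0 \<and> 0 < inflow E k i)"
  shows "abs_decrease E k i = 0"
  using assms outflow_eq_0_or_le_bk[of E k i] inflow_nonneg[of E k i] outflow_nonneg[of E k i]
  unfolding abs_decrease_def bk_Suc by linarith

lemma abs_decrease_ge:
  assumes "bk E k i < 0" "0 < inflow E k i"
  shows "2 * gamma k \<le> abs_decrease E k i"
  using bk_le_neg_gamma[OF assms(1)] gamma_le_inflow[OF assms(2)] assms(1)
    outflow_eq_0_or_le_bk[of E k i] outflow_nonneg[of E k i]
  unfolding abs_decrease_def bk_Suc by linarith

lemma abs_decrease_nonneg: "0 \<le> abs_decrease E k i"
  using abs_decrease_eq_0[of E k i] abs_decrease_ge[of E k i] gamma_pos[of k]
  by (cases "bk E k i < 0 \<and> 0 < inflow E k i") auto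

lemma eps_norm1_Suc:
  assumes "E \<subseteq> {1..N} \<times> {1..N}"
  shows "eps_norm1 N E (Suc k) = eps_norm1 N E k - (\<Sum>i\<in>{1..N}. abs_decrease E k i)"
  using sum_inflow_eq_sum_outflow[OF assms, of k]
  by (simp add: eps_norm1_def abs_decrease_def sum.distrib sum_subtractf)

lemma dec_event_iff:
  assumes "E \<subseteq> {1..N} \<times> {1..N}"
  shows "dec_event N E k \<longleftrightarrow> (\<exists>i\<in>{1..N}. bk E k i < 0 \<and> 0 < inflow E k i)"
proof -
  have "in_nbrs E i \<subseteq> {1..N}" for i
    using assms by (auto simp: in_nbrs_def)
  then have "finite (in_nbrs E i)" for i
    using finite_subset by blast
  then have inflow_pos: "0 < inflow E k i \<longleftrightarrow> (\<exists>j. (j, i) \<in> E \<and> 0 < nk E k j)" for i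
    by (simp add: inflow_pos_iff in_nbrs_def)
  show ?thesis
  proof
    assume "dec_event N E k"
    then obtain i j where "(i, j) \<in> E" "0 < nk E k i" "bk E k j < 0"
      unfolding dec_event_def out_nbrs_def by blast
    then show "\<exists>i\<in>{1..N}. bk E k i < 0 \<and> 0 < inflow E k i"
      using assms inflow_pos[of j] by blast
  next
    assume "\<exists>i\<in>{1..N}. bk E k i < 0 \<and> 0 < inflow E k i"
    then obtain i j where "(j, i) \<in> E" "0 < nk E k j" "bk E k i < 0"
      using inflow_pos by blast
    then show "dec_event N E k"
      using assms unfolding dec_event_def out_nbrs_def by blast
  qed
qed

theorem lemma1:
  fixes N :: nat and E :: "(nat \<times> nat) set" and k :: nat
  assumes "E \<subseteq> {1..N} \<times> {1..N}"
    and "\<forall>i. (i, i) \<notin> E"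
    and "strongly_connected N E"
  shows "(dec_event N E k \<longrightarrow> eps_norm1 N E (Suc k) \<le> eps_norm1 N E k - 2 * gamma k)
       \<and> (\<not> dec_event N E k \<longrightarrow> eps_norm1 N E (Suc k) = eps_norm1 N E k)"
proof (intro conjI impI)
  assume "dec_event N E k"
  then obtain i where i: "i \<in> {1..N}" "bk E k i < 0" "0 < inflow E k i"
    using dec_event_iff[OF assms(1)] by blast
  have "2 * gamma k \<le> abs_decrease E k i"
    using abs_decrease_ge i(2,3) .
  also have "\<dots> \<le> (\<Sum>i\<in>{1..N}. abs_decrease E k i)"
    by (rule member_le_sum[OF i(1)]) (simp_all add: abs_decrease_nonneg)
  finally show "eps_norm1 N E (Suc k) \<le> eps_norm1 N E k - 2 * gamma k"
    using eps_norm1_Suc[OF assms(1), of k] by linarith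
next
  assume "\<not> dec_event N E k"
  then have "\<forall>i\<in>{1..N}. abs_decrease E k i = 0"
    using abs_decrease_eq_0 dec_event_iff[OF assms(1)] by blast
  then show "eps_norm1 N E (Suc k) = eps_norm1 N E k"
    using eps_norm1_Suc[OF assms(1), of k] by simp
qed

end
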